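(* Let $\boldsymbol{x}\in\mathbb{R}^K$ have pairwise distinct entries, let $x_{\max}=\max_k x_k$ be attained at index $\max$, let $\epsilon\in\mathbb{R}$, and suppose the set $\mathcal{N}=\{n : \epsilon< x_n< x_{\max}\}$ is nonempty, with $N=|\mathcal{N}|$. For temperature $T>0$ define $$\mathcal{M}_T(\boldsymbol{x}) = 1-\frac{1}{N}\sum_{n\in\mathcal{N}}\big(\phi_T(\boldsymbol{x})_{\max}-\phi_T(\boldsymbol{x})_n\big).$$ Then the map $T\mapsto \mathcal{M}_T(\boldsymbol{x})$ is strictly increasing on $(0,\infty)$.
   Context: For $T>0$, the SoftMax with temperature $T$ is $\phi_T:\mathbb{R}^K\to\Delta^{K-1}$, $\phi_T(\boldsymbol{x})_i = \dfrac{e^{x_i/T}}{\sum_{k=1}^K e^{x_k/T}}$, where $\Delta^{K-1}=\{\boldsymbol{p}\in\mathbb{R}^K_{\ge 0}: \sum_k p_k=1\}$. The quantity $\mathcal{M}_T$ is the paper's "multi-modality metric" applied to $\phi_T$. *)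

theory Defs
  imports "HOL-Analysis.Analysis"
begin

definition softmax :: "real \<Rightarrow> real^'k \<Rightarrow> real^'k" where
  "softmax T x = (\<chi> i. exp (x$i / T) / (\<Sum>j\<in>UNIV. exp (x$j / T)))"

definition mm_index_set :: "real \<Rightarrow> 'k \<Rightarrow> real^'k \<Rightarrow> 'k set" where
  "mm_index_set eps imax x = {n. eps < x$n \<and> x$n < x$imax}"

definition multimodality :: "real \<Rightarrow> real \<Rightarrow> 'k::finite \<Rightarrow> real^'k \<Rightarrow> real" where
  "multimodality T eps imax x =
     1 - (1 / real (card (mm_index_set eps imax x))) *
         (\<Sum>n\<in>mm_index_set eps imax x. softmax T x $ imax - softmax T x $ n)"

end

theory Submission
  imports Defs
begin

text \<open>Shifting by the maximum, each gap \<open>\<phi>\<^sub>T(x)\<^sub>max - \<phi>\<^sub>T(x)\<^sub>n\<close> equals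
  \<open>(1 - exp ((x\<^sub>n - x\<^sub>max)/T)) / Z\<^sub>T\<close> with \<open>Z\<^sub>T = \<Sum>\<^sub>j exp ((x\<^sub>j - x\<^sub>max)/T)\<close>.
  As \<open>T\<close> grows, every numerator strictly decreases and stays positive while every term of
  \<open>Z\<^sub>T\<close> weakly increases, so the averaged gap strictly decreases and \<open>\<M>\<^sub>T\<close> strictly increases.\<close>

lemma softmax_shift:
  fixes x :: "real^'k::finite"
  shows "softmax T x $ i = exp ((x$i - c) / T) / (\<Sum>j\<in>UNIV. exp ((x$j - c) / T))"
proof -
  have "exp ((a - c) / T) = exp (a / T) / exp (c / T)" for a
    by (simp add: diff_divide_distrib exp_diff)
  then show ?thesis
    unfolding softmax_def by (simp add: sum_divide_distrib[symmetric])
qed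

lemma sum_softmax_gaps:
  fixes x :: "real^'k::finite"
  shows "(\<Sum>n\<in>N. softmax T x $ m - softmax T x $ n) =
    (\<Sum>n\<in>N. 1 - exp ((x$n - x$m) / T)) / (\<Sum>j\<in>UNIV. exp ((x$j - x$m) / T))"
  by (simp add: softmax_shift[where c = "x$m"] sum_divide_distrib diff_divide_distrib)

lemma exp_div_mono_nonpos:
  fixes d :: real
  assumes "d \<le> 0" "0 < S" "S \<le> T"
  shows "exp (d / S) \<le> exp (d / T)"
  using assms divide_left_mono_neg[of S T d] by simp

lemma exp_div_strict_mono_neg:
  fixes d :: real
  assumes "d < 0" "0 < S" "S < T"
  shows "exp (d / S) < exp (d / T)"
  using assms divide_strict_left_mono_neg[of S T d] by simp

lemma sum_softmax_gaps_strict_antimono: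
  fixes x :: "real^'k::finite"
  assumes max: "\<And>k. x$k \<le> x$m"
    and below: "\<And>n. n \<in> N \<Longrightarrow> x$n < x$m"
    and "N \<noteq> {}" and "0 < S" "S < T"
  shows "(\<Sum>n\<in>N. softmax T x $ m - softmax T x $ n)
       < (\<Sum>n\<in>N. softmax S x $ m - softmax S x $ n)"
proof -
  define A where "A U = (\<Sum>n\<in>N. 1 - exp ((x$n - x$m) / U))" for U
  define Z where "Z U = (\<Sum>j\<in>UNIV. exp ((x$j - x$m) / U))" for U
  have A_less: "A T < A S"
    unfolding A_def using \<open>N \<noteq> {}\<close> below assms(4,5)
    by (intro sum_strict_mono diff_strict_left_mono exp_div_strict_mono_neg) auto
  have A_pos: "0 < A T"
    unfolding A_def using \<open>N \<noteq> {}\<close> below assms(4,5)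
    by (intro sum_pos) (auto simp: divide_neg_pos)
  have Z_le: "Z S \<le> Z T"
    unfolding Z_def using max assms(4,5) by (intro sum_mono exp_div_mono_nonpos) auto
  have Z_pos: "0 < Z S"
    unfolding Z_def by (intro sum_pos) auto
  have "A T / Z T \<le> A T / Z S"
    using A_pos Z_pos Z_le by (simp add: frac_le)
  also have "\<dots> < A S / Z S"
    using A_less Z_pos by (simp add: divide_strict_right_mono)
  finally show ?thesis
    unfolding sum_softmax_gaps A_def Z_def .
qed

theorem mainTheorem3:
  fixes x :: "real^'k::finite" and eps :: real and imax :: 'k
  assumes distinct: "inj (\<lambda>i. x$i)"
    and maxidx: "x$imax = (MAX k. x$k)"
    and nonempty: "mm_index_set eps imax x \<noteq> {}"
  shows "strict_mono_on {0<..} (\<lambda>T. multimodality T eps imax x)"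
proof (rule strict_mono_onI)
  fix S T :: real
  assume "S \<in> {0<..}" "T \<in> {0<..}" "S < T"
  define N where "N = mm_index_set eps imax x"
  have "x$k \<le> x$imax" for k
    unfolding maxidx by (rule Max_ge) auto
  moreover have "x$n < x$imax" if "n \<in> N" for n
    using that unfolding N_def mm_index_set_def by auto
  ultimately have gaps: "(\<Sum>n\<in>N. softmax T x $ imax - softmax T x $ n)
                       < (\<Sum>n\<in>N. softmax S x $ imax - softmax S x $ n)"
    using nonempty \<open>S \<in> {0<..}\<close> \<open>S < T\<close> unfolding N_def
    by (intro sum_softmax_gaps_strict_antimono) auto
  have "0 < card N"
    using nonempty unfolding N_def by (simp add: card_gt_0_iff)
  with gaps show "multimodality S eps imax x < multimodality T eps imax x"
    unfolding multimodality_def N_def[symmetric]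
    by (simp add: divide_strict_right_mono)
qed

end
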